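(* Let $N\ge1$ and suppose each $f_\ell$ ($0\le\ell\le2N-2$) is holomorphic on $\{|x-w_c|<r_c\}$ for every $c\in\mathcal I$, for some radii $r_c>0$. Let $x,y$ lie in the interior of $\mathcal D$, let $k\ge1$ and $a_1,\dots,a_k\in\mathcal I$ with $a_i\ne-a_{i+1}$ for $1\le i\le k-1$, and put $\gamma=\gamma_{a_1}\gamma_{a_2}\cdots\gamma_{a_k}$. If $|\gamma x-w_{-a_1}|<r_{-a_1}$, then the series \[ \sum_{m_1,\dots,m_k\ge0}\tilde p_{a_k}(x;m_k)\tilde R_{a_ka_{k-1}}(m_k,m_{k-1})\cdots\tilde R_{a_2a_1}(m_2,m_1)\,q_{a_1}(y;m_1) \] converges and equals $\psi^{(0)}_N(\gamma x,y)\,\big(\tfrac{d(\gamma x)}{dx}\big)^N$.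
   Context: Schottky setup: $g\ge1$, $\mathcal I=\{\pm1,\dots,\pm g\}$, $\mathcal I_+=\{1,\dots,g\}$; complex parameters $w_a$ ($a\in\mathcal I$) and $\rho_a\ne0$ ($a\in\mathcal I_+$), $\rho_{-a}:=\rho_a$, satisfying $|w_a-w_b|>|\rho_a|^{1/2}+|\rho_b|^{1/2}$ for all $a\ne b$ in $\mathcal I$. $\Delta_a$ is the open disc with centre $w_a$ and radius $|\rho_a|^{1/2}$; $\mathcal D=\widehat{\mathbb C}\setminus\bigcup_{a\in\mathcal I}\Delta_a$. For $a\in\mathcal I_+$, $\gamma_a z=w_{-a}+\frac{\rho_a}{z-w_a}$ (a Möbius map sending the exterior of $\Delta_a$ into $\Delta_{-a}$) and $\gamma_{-a}=\gamma_a^{-1}$ (so $\gamma_{-a}z=w_a+\rho_a/(z-w_{-a})$). Coefficients: $\partial^{(j)}=\frac1{j!}\partial^j$, $\partial^{(i,j)}F(x,y)=\partial_x^{(i)}\partial_y^{(j)}F(x,y)$. $\psi^{(0)}_N(x,y)=\frac1{x-y}+\sum_{\ell=0}^{2N-2}f_\ell(x)y^\ell$. For $a,b\in\mathcal I$, $m,n\ge0$: $\tilde p_a(x;n)=\rho_a^{(n+2N-1)/2}(x-w_a)^{-n-2N}$; $q_a(y;m)=(-1)^N\rho_a^{(m+1)/2}\partial^{(m,0)}\psi^{(0)}_N(w_{-a},y)$; $\tilde R_{ab}(m,n)=(-1)^N\rho_a^{(m+1)/2}\partial_x^{(m)}\tilde p_b(x;n)|_{x=w_{-a}}$ if $a\ne-b$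 and $\tilde R_{ab}(m,n)=0$ if $a=-b$ (a consistent choice of square roots $\rho_a^{1/2}$ is fixed). *)

theory Defs
  imports "HOL-Analysis.Analysis"
begin

text \<open>Index set I = {+-1,...,+-g}, represented by nonzero integers of absolute value at most g.\<close>
definition Iset :: "nat \<Rightarrow> int set" where
  "Iset g = {a. a \<noteq> 0 \<and> \<bar>a\<bar> \<le> int g}"

text \<open>The fundamental domain D (restricted to finite points): complement of the open discs.\<close>
definition Dset :: "nat \<Rightarrow> (int \<Rightarrow> complex) \<Rightarrow> (int \<Rightarrow> complex) \<Rightarrow> complex set" where
  "Dset g w \<rho> = - (\<Union>a\<in>Iset g. ball (w a) (sqrt (cmod (\<rho> a))))"

text \<open>gamma_a z = w_{-a} + rho_a/(z - w_a), valid for all a in I since rho_{-a} = rho_a.\<close>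
definition gam :: "(int \<Rightarrow> complex) \<Rightarrow> (int \<Rightarrow> complex) \<Rightarrow> int \<Rightarrow> complex \<Rightarrow> complex" where
  "gam w \<rho> a z = w (-a) + \<rho> a / (z - w a)"

definition gamw :: "(int \<Rightarrow> complex) \<Rightarrow> (int \<Rightarrow> complex) \<Rightarrow> int list \<Rightarrow> complex \<Rightarrow> complex" where
  "gamw w \<rho> as z = foldr (\<lambda>a u. gam w \<rho> a u) as z"

definition psi0 :: "nat \<Rightarrow> (nat \<Rightarrow> complex \<Rightarrow> complex) \<Rightarrow> complex \<Rightarrow> complex \<Rightarrow> complex" where
  "psi0 N f x y = 1 / (x - y) + (\<Sum>l = 0..2*N-2. f l x * y ^ l)"

text \<open>sq a is the fixed square root rho_a^{1/2}; so rho_a^{(n+2N-1)/2} = sq a ^ (n+2N-1).\<close>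
definition ptil :: "(int \<Rightarrow> complex) \<Rightarrow> (int \<Rightarrow> complex) \<Rightarrow> nat \<Rightarrow> int \<Rightarrow> nat \<Rightarrow> complex \<Rightarrow> complex" where
  "ptil w sq N b n x = sq b ^ (n + 2*N - 1) / (x - w b) ^ (n + 2*N)"

definition qq :: "(int \<Rightarrow> complex) \<Rightarrow> (int \<Rightarrow> complex) \<Rightarrow> nat \<Rightarrow> (nat \<Rightarrow> complex \<Rightarrow> complex)
                  \<Rightarrow> int \<Rightarrow> complex \<Rightarrow> nat \<Rightarrow> complex" where
  "qq w sq N f a y m =
     (-1) ^ N * sq a ^ (m + 1) * ((deriv ^^ m) (\<lambda>x. psi0 N f x y) (w (-a)) / fact m)"

definition Rt :: "(int \<Rightarrow> complex) \<Rightarrow> (int \<Rightarrow> complex) \<Rightarrow> nat \<Rightarrow> int \<Rightarrow> int \<Rightarrow> nat \<Rightarrow> nat \<Rightarrow> complex" where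
  "Rt w sq N a b m n =
     (if a = - b then 0
      else (-1) ^ N * sq a ^ (m + 1) * ((deriv ^^ m) (ptil w sq N b n) (w (-a)) / fact m))"

text \<open>Iterated summation of the chain, innermost index m_k:
  chainv [a_j,...,a_k] x m_j =
    sum_{m_{j+1}} ... sum_{m_k} ptil_{a_k}(x;m_k) R_{a_k a_{k-1}}(m_k,m_{k-1}) ... R_{a_{j+1} a_j}(m_{j+1},m_j).\<close>
fun chainv :: "(int \<Rightarrow> complex) \<Rightarrow> (int \<Rightarrow> complex) \<Rightarrow> nat \<Rightarrow> int list \<Rightarrow> complex \<Rightarrow> nat \<Rightarrow> complex" where
  "chainv w sq N [] x m = 0"
| "chainv w sq N [a] x m = ptil w sq N a m x"
| "chainv w sq N (a1 # a2 # rest) x m =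
     (\<Sum>n. chainv w sq N (a2 # rest) x n * Rt w sq N a2 a1 n m)"

fun chain_conv :: "(int \<Rightarrow> complex) \<Rightarrow> (int \<Rightarrow> complex) \<Rightarrow> nat \<Rightarrow> int list \<Rightarrow> complex \<Rightarrow> bool" where
  "chain_conv w sq N [] x = True"
| "chain_conv w sq N [a] x = True"
| "chain_conv w sq N (a1 # a2 # rest) x =
     ((\<forall>m. summable (\<lambda>n. chainv w sq N (a2 # rest) x n * Rt w sq N a2 a1 n m))
      \<and> chain_conv w sq N (a2 # rest) x)"

end

theory Submission
  imports Defs "HOL-Complex_Analysis.Cauchy_Integral_Formula"
begin

text \<open>
  For \<open>F\<close> holomorphic near \<open>w (-a)\<close>, the Taylor series of \<open>F\<close> at \<open>w (-a)\<close>, evaluated at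
  \<open>gam a z\<close> and multiplied by \<open>(gam a)' z ^ N\<close>, is termwise
  \<open>\<Sum>m. ptil a m z * (-1)^N * sq a ^ (m+1) * F\<^sup>(\<^sup>m\<^sup>) (w (-a)) / m!\<close>,
  because \<open>gam a z - w (-a) = \<rho> a / (z - w a)\<close> and \<open>(gam a)' z = - \<rho> a / (z - w a)^2\<close>.
  Both \<open>qq\<close> and \<open>Rt\<close> are coefficients of this shape, for \<open>F = psi0 (\<cdot>) y\<close> and \<open>F = ptil b n\<close>.
  Hence the chain sum collapses from the innermost index outwards: by induction on the word and the
  chain rule, \<open>chainv (a # rest) x m = ptil a m (gamw rest x) * (gamw rest)' x ^ N\<close>.
  The Schottky condition provides convergence: a reduced word \<open>b # rest\<close> maps \<open>x\<close> into the disc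
  around \<open>w (-b)\<close>, which lies inside the disc of convergence of every expansion needed at that stage.
\<close>

lemma successively_iff_nth:
  "successively P xs \<longleftrightarrow> (\<forall>i. Suc i < length xs \<longrightarrow> P (xs ! i) (xs ! Suc i))"
proof (induction P xs rule: successively.induct)
  case (3 P x y xs)
  have split_0_Suc: "(\<forall>i. Q i) \<longleftrightarrow> Q 0 \<and> (\<forall>i. Q (Suc i))" for Q :: "nat \<Rightarrow> bool"
    by (metis not0_implies_Suc)
  show ?case
    using 3 by (subst split_0_Suc) simp
qed auto

abbreviation reduced :: "int list \<Rightarrow> bool"
  where "reduced \<equiv> successively (\<lambda>a b. a \<noteq> - b)"

lemma Iset_uminus [simp]: "- a \<in> Iset g \<longleftrightarrow> a \<in> Iset g"
  by (simp add: Iset_def)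

lemma ptil_mult_sq_power:
  assumes sq: "sq b ^ 2 = \<rho> b" and N: "N \<ge> 1" and z: "z \<noteq> w b"
  shows "ptil w sq N b m z * ((-1) ^ N * sq b ^ (m + 1))
         = (- \<rho> b / (z - w b)^2) ^ N * (\<rho> b / (z - w b)) ^ m"
proof -
  have "m + 2*N - 1 + (m + 1) = 2 * (m + N)"
    using N by simp
  then have "sq b ^ (m + 2*N - 1) * sq b ^ (m + 1) = \<rho> b ^ (m + N)"
    by (metis power_add power_mult sq)
  then show ?thesis
    using z
    by (simp add: ptil_def power_divide power_minus[of "\<rho> b / _"] power_add field_simps
        flip: power_mult)
qed

lemma gam_has_field_derivative:
  "z \<noteq> w b \<Longrightarrow> (gam w \<rho> b has_field_derivative - \<rho> b / (z - w b)^2) (at z)"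
  unfolding gam_def[abs_def]
  by (auto intro!: derivative_eq_intros simp: power2_eq_square field_simps)

lemma deriv_gam: "z \<noteq> w b \<Longrightarrow> deriv (gam w \<rho> b) z = - \<rho> b / (z - w b)^2"
  by (rule DERIV_imp_deriv) (rule gam_has_field_derivative)

lemma gam_field_differentiable: "z \<noteq> w b \<Longrightarrow> gam w \<rho> b field_differentiable at z"
  using gam_has_field_derivative field_differentiable_def by blast

lemma gamw_Nil [simp]: "gamw w \<rho> [] = id"
  by (simp add: gamw_def fun_eq_iff)

lemma gamw_Cons: "gamw w \<rho> (b # rest) z = gam w \<rho> b (gamw w \<rho> rest z)"
  by (simp add: gamw_def)

lemma gamw_Cons_comp: "gamw w \<rho> (b # rest) = gam w \<rho> b \<circ> gamw w \<rho> rest"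
  by (simp add: fun_eq_iff gamw_Cons)

definition expansion_coeff ::
    "(int \<Rightarrow> complex) \<Rightarrow> (int \<Rightarrow> complex) \<Rightarrow> nat \<Rightarrow> int \<Rightarrow> (complex \<Rightarrow> complex)
      \<Rightarrow> nat \<Rightarrow> complex"
  where "expansion_coeff w sq N a F m
           = (-1) ^ N * sq a ^ (m + 1) * ((deriv ^^ m) F (w (-a)) / fact m)"

lemma qq_eq_expansion_coeff: "qq w sq N f a y = expansion_coeff w sq N a (\<lambda>x. psi0 N f x y)"
  by (simp add: qq_def expansion_coeff_def fun_eq_iff)

lemma Rt_eq_expansion_coeff:
  "a \<noteq> - b \<Longrightarrow> Rt w sq N a b m n = expansion_coeff w sq N a (ptil w sq N b n) m"
  by (simp add: Rt_def expansion_coeff_def)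

lemma expansion_coeff_sums:
  assumes F: "F holomorphic_on ball (w (-b)) R"
    and z: "z \<noteq> w b" and near: "cmod (gam w \<rho> b z - w (-b)) < R"
    and sq: "sq b ^ 2 = \<rho> b" and N: "N \<ge> 1"
  shows "(\<lambda>m. ptil w sq N b m z * expansion_coeff w sq N b F m)
           sums (F (gam w \<rho> b z) * deriv (gam w \<rho> b) z ^ N)"
proof -
  have "(\<lambda>m. (deriv ^^ m) F (w (-b)) / fact m * (gam w \<rho> b z - w (-b)) ^ m) sums F (gam w \<rho> b z)"
    using holomorphic_power_series[OF F] near by (simp add: dist_norm norm_minus_commute)
  then have "(\<lambda>m. deriv (gam w \<rho> b) z ^ N
                 * ((deriv ^^ m) F (w (-b)) / fact m * (gam w \<rho> b z - w (-b)) ^ m))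
               sums (deriv (gam w \<rho> b) z ^ N * F (gam w \<rho> b z))"
    by (rule sums_mult)
  moreover have "ptil w sq N b m z * expansion_coeff w sq N b F m
      = deriv (gam w \<rho> b) z ^ N * ((deriv ^^ m) F (w (-b)) / fact m * (gam w \<rho> b z - w (-b)) ^ m)" for m
    using ptil_mult_sq_power[where sq=sq and b=b and \<rho>=\<rho> and w=w, OF sq N z, of m]
    by (simp add: expansion_coeff_def deriv_gam[where w=w and b=b and \<rho>=\<rho>, OF z] gam_def
        mult_ac)
  ultimately show ?thesis
    by (simp add: mult.commute)
qed

lemma ptil_holomorphic_on: "w b \<notin> S \<Longrightarrow> ptil w sq N b n holomorphic_on S"
  unfolding ptil_def[abs_def] by (auto intro!: holomorphic_intros)

lemma psi0_holomorphic_on_ball: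
  assumes "\<forall>l \<le> 2*N - 2. f l holomorphic_on ball c r"
  shows "(\<lambda>x. psi0 N f x y) holomorphic_on ball c (min r (cmod (y - c)))"
proof -
  have "f l holomorphic_on ball c (min r (cmod (y - c)))" if "l \<le> 2*N - 2" for l
  proof (rule holomorphic_on_subset)
    show "f l holomorphic_on ball c r"
      using assms that by simp
  qed (simp add: subset_ball)
  moreover have "y \<notin> ball c (min r (cmod (y - c)))"
    by (simp add: dist_norm norm_minus_commute)
  ultimately show ?thesis
    unfolding psi0_def by (auto intro!: holomorphic_intros)
qed

lemma interior_Dset_exterior:
  assumes v: "v \<in> interior (Dset g w \<rho>)" and c: "c \<in> Iset g" and "\<rho> c \<noteq> 0"
  shows "sqrt (cmod (\<rho> c)) < cmod (v - w c)"
proof -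
  let ?U = "\<Union>a\<in>Iset g. ball (w a) (sqrt (cmod (\<rho> a)))"
  have "cball (w c) (sqrt (cmod (\<rho> c))) = closure (ball (w c) (sqrt (cmod (\<rho> c))))"
    using \<open>\<rho> c \<noteq> 0\<close> by simp
  also have "\<dots> \<subseteq> closure ?U"
    using c by (intro closure_mono) blast
  finally have "v \<notin> cball (w c) (sqrt (cmod (\<rho> c)))"
    using v unfolding Dset_def interior_complement by blast
  then show ?thesis
    by (simp add: dist_norm norm_minus_commute)
qed

locale schottky =
  fixes g :: nat and w \<rho> :: "int \<Rightarrow> complex"
  assumes rho_sym: "\<forall>a\<in>Iset g. \<rho> (-a) = \<rho> a"
    and rho_nz: "\<forall>a\<in>Iset g. \<rho> a \<noteq> 0"
    and discs_separated: "\<forall>a\<in>Iset g. \<forall>b\<in>Iset g. a \<noteq> b \<longrightarrow>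
                      cmod (w a - w b) > sqrt (cmod (\<rho> a)) + sqrt (cmod (\<rho> b))"
begin

lemma gam_exterior_into_disc:
  assumes a: "a \<in> Iset g" and z: "sqrt (cmod (\<rho> a)) < cmod (z - w a)"
  shows "cmod (gam w \<rho> a z - w (-a)) < sqrt (cmod (\<rho> a))"
proof -
  define t where "t = sqrt (cmod (\<rho> a))"
  have "t > 0" "cmod (\<rho> a) = t * t" "t < cmod (z - w a)"
    using rho_nz a z by (simp_all add: t_def)
  then have "cmod (\<rho> a) / cmod (z - w a) < t"
    by (simp add: divide_less_eq)
  then show ?thesis
    by (simp add: gam_def norm_divide t_def)
qed

lemma disc_exterior_of_other_discs:
  assumes a: "a \<in> Iset g" and b: "b \<in> Iset g" and "a \<noteq> b"
    and z: "cmod (z - w a) < sqrt (cmod (\<rho> a))"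
  shows "sqrt (cmod (\<rho> b)) < cmod (z - w b)"
proof -
  have "w a - w b = (z - w b) - (z - w a)"
    by simp
  then have "cmod (w a - w b) \<le> cmod (z - w b) + cmod (z - w a)"
    by (metis norm_triangle_ineq4)
  moreover have "cmod (w a - w b) > sqrt (cmod (\<rho> a)) + sqrt (cmod (\<rho> b))"
    using discs_separated a b \<open>a \<noteq> b\<close> by blast
  ultimately show ?thesis
    using z by linarith
qed

end

locale schottky_exterior_point = schottky +
  fixes x :: complex
  assumes x_exterior: "\<forall>c\<in>Iset g. sqrt (cmod (\<rho> c)) < cmod (x - w c)"
begin

lemma gamw_exterior:
  "set as \<subseteq> Iset g \<Longrightarrow> a \<in> Iset g \<Longrightarrow> reduced (a # as)
   \<Longrightarrow> sqrt (cmod (\<rho> a)) < cmod (gamw w \<rho> as x - w a)"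
proof (induction as arbitrary: a)
  case Nil
  then show ?case
    using x_exterior by simp
next
  case (Cons b rest)
  then have "sqrt (cmod (\<rho> b)) < cmod (gamw w \<rho> rest x - w b)"
    by (auto simp: successively_Cons)
  then have "cmod (gam w \<rho> b (gamw w \<rho> rest x) - w (-b)) < sqrt (cmod (\<rho> (-b)))"
    using gam_exterior_into_disc[of b] rho_sym Cons.prems by auto
  then show ?case
    using disc_exterior_of_other_discs[of "-b" a] Cons.prems by (auto simp: gamw_Cons)
qed

lemma gamw_field_differentiable:
  "set as \<subseteq> Iset g \<Longrightarrow> reduced as \<Longrightarrow> gamw w \<rho> as field_differentiable at x"
proof (induction as)
  case Nil
  then show ?case
    by (simp add: field_differentiable_ident)
next
  case (Cons b rest)
  have "gamw w \<rho> rest field_differentiable at x"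
    using Cons by (auto simp: successively_Cons)
  moreover have "gamw w \<rho> rest x \<noteq> w b"
    using gamw_exterior[of rest b] Cons.prems by auto
  ultimately show ?case
    unfolding gamw_Cons_comp by (rule field_differentiable_compose[OF _ gam_field_differentiable])
qed

lemma deriv_gamw_Cons:
  assumes "set (b # rest) \<subseteq> Iset g" "reduced (b # rest)"
  shows "deriv (gamw w \<rho> (b # rest)) x
           = deriv (gam w \<rho> b) (gamw w \<rho> rest x) * deriv (gamw w \<rho> rest) x"
proof -
  have "gamw w \<rho> rest x \<noteq> w b"
    using gamw_exterior[of rest b] assms by auto
  with assms show ?thesis
    unfolding gamw_Cons_comp
    by (auto simp: successively_Cons
        intro!: deriv_chain gamw_field_differentiable gam_field_differentiable)
qed

lemma gamw_in_disc:
  assumes "set (a # rest) \<subseteq> Iset g" "reduced (a # rest)"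
  shows "cmod (gamw w \<rho> (a # rest) x - w (-a)) < sqrt (cmod (\<rho> a))"
  using gam_exterior_into_disc gamw_exterior[of rest a] assms by (simp add: gamw_Cons)

lemma sums_expansion_coeff_word:
  assumes word: "set (a # rest) \<subseteq> Iset g" "reduced (a # rest)"
    and c: "\<And>m. c m = ptil w sq N a m (gamw w \<rho> rest x) * deriv (gamw w \<rho> rest) x ^ N"
    and F: "F holomorphic_on ball (w (-a)) R"
    and near: "cmod (gamw w \<rho> (a # rest) x - w (-a)) < R"
    and sq_root: "\<forall>c\<in>Iset g. sq c ^ 2 = \<rho> c" and N: "N \<ge> 1"
  shows "(\<lambda>m. c m * expansion_coeff w sq N a F m)
           sums (F (gamw w \<rho> (a # rest) x) * deriv (gamw w \<rho> (a # rest)) x ^ N)"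
proof -
  let ?z = "gamw w \<rho> rest x" and ?D = "deriv (gamw w \<rho> rest) x"
  have "?z \<noteq> w a"
    using gamw_exterior[of rest a] word by auto
  then have "(\<lambda>m. ?D ^ N * (ptil w sq N a m ?z * expansion_coeff w sq N a F m))
      sums (?D ^ N * (F (gam w \<rho> a ?z) * deriv (gam w \<rho> a) ?z ^ N))"
    using near sq_root word N
    by (intro sums_mult expansion_coeff_sums[where \<rho>=\<rho> and w=w and b=a and sq=sq, OF F])
       (auto simp: gamw_Cons)
  then show ?thesis
    using deriv_gamw_Cons[OF word]
    by (simp add: c gamw_Cons power_mult_distrib mult_ac)
qed

lemma chain_conv_and_chainv_eq:
  assumes "set (a # rest) \<subseteq> Iset g" "reduced (a # rest)"
    and sq_root: "\<forall>c\<in>Iset g. sq c ^ 2 = \<rho> c" and N: "N \<ge> 1"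
  shows "chain_conv w sq N (a # rest) x \<and>
    (\<forall>m. chainv w sq N (a # rest) x m
           = ptil w sq N a m (gamw w \<rho> rest x) * deriv (gamw w \<rho> rest) x ^ N)"
  using assms(1,2)
proof (induction rest arbitrary: a)
  case Nil
  then show ?case
    by simp
next
  case (Cons b rest)
  have aI: "a \<in> Iset g" and bI: "b \<in> Iset g" and ab: "a \<noteq> - b"
    and word: "set (b # rest) \<subseteq> Iset g" "reduced (b # rest)"
    using Cons.prems by auto
  have IH: "chain_conv w sq N (b # rest) x"
      "\<And>n. chainv w sq N (b # rest) x n
             = ptil w sq N b n (gamw w \<rho> rest x) * deriv (gamw w \<rho> rest) x ^ N"
    using Cons.IH[OF word] by auto
  have "sqrt (cmod (\<rho> (-b))) + sqrt (cmod (\<rho> a)) < cmod (w (-b) - w a)"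
    using discs_separated aI bI ab by force
  then have near: "cmod (gamw w \<rho> (b # rest) x - w (-b)) < cmod (w (-b) - w a)"
    using gamw_in_disc[OF word] rho_sym bI
    by (smt (verit, best) real_sqrt_ge_zero norm_ge_zero)
  have "(\<lambda>n. chainv w sq N (b # rest) x n * Rt w sq N b a n m)
      sums (ptil w sq N a m (gamw w \<rho> (b # rest) x) * deriv (gamw w \<rho> (b # rest)) x ^ N)" for m
    using ab Rt_eq_expansion_coeff[of b a]
    by (simp, intro sums_expansion_coeff_word[OF word IH(2) ptil_holomorphic_on near sq_root N])
       (simp add: dist_norm)
  then show ?case
    using IH(1) by (auto intro: sums_summable simp: sums_iff)
qed

end

theorem mainTheorem10:
  fixes g N :: nat and w \<rho> sq :: "int \<Rightarrow> complex" and r :: "int \<Rightarrow> real"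
    and f :: "nat \<Rightarrow> complex \<Rightarrow> complex" and x y :: complex and as :: "int list"
  assumes g: "g \<ge> 1"
    and rho_sym: "\<forall>a\<in>Iset g. \<rho> (-a) = \<rho> a"
    and rho_nz: "\<forall>a\<in>Iset g. \<rho> a \<noteq> 0"
    and sq_root: "\<forall>a\<in>Iset g. sq a ^ 2 = \<rho> a"
    and sq_sym: "\<forall>a\<in>Iset g. sq (-a) = sq a"
    and schottky: "\<forall>a\<in>Iset g. \<forall>b\<in>Iset g. a \<noteq> b \<longrightarrow>
                      cmod (w a - w b) > sqrt (cmod (\<rho> a)) + sqrt (cmod (\<rho> b))"
    and N: "N \<ge> 1"
    and r_pos: "\<forall>c\<in>Iset g. r c > 0"
    and hol: "\<forall>l \<le> 2*N-2. \<forall>c\<in>Iset g. f l holomorphic_on ball (w c) (r c)"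
    and x: "x \<in> interior (Dset g w \<rho>)" and y: "y \<in> interior (Dset g w \<rho>)"
    and k: "length as \<ge> 1"
    and as_I: "set as \<subseteq> Iset g"
    and reduced: "\<forall>i. Suc i < length as \<longrightarrow> as ! i \<noteq> - (as ! Suc i)"
    and near: "cmod (gamw w \<rho> as x - w (- hd as)) < r (- hd as)"
  shows "chain_conv w sq N as x
       \<and> (\<lambda>m. chainv w sq N as x m * qq w sq N f (hd as) y m)
           sums (psi0 N f (gamw w \<rho> as x) y * (deriv (gamw w \<rho> as) x) ^ N)"
proof -
  have exterior: "sqrt (cmod (\<rho> c)) < cmod (v - w c)"
    if "v \<in> interior (Dset g w \<rho>)" "c \<in> Iset g" for v c
    using interior_Dset_exterior that rho_nz by blast
  interpret schottky_exterior_point g w \<rho> x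
    using rho_sym rho_nz schottky exterior[OF x] by unfold_locales auto
  obtain a rest where as: "as = a # rest"
    using k by (cases as) auto
  have word: "set (a # rest) \<subseteq> Iset g" "reduced (a # rest)"
    using reduced as_I by (auto simp: as successively_iff_nth)
  then have aI: "a \<in> Iset g"
    by simp
  obtain chain: "chain_conv w sq N (a # rest) x"
      "\<And>m. chainv w sq N (a # rest) x m
             = ptil w sq N a m (gamw w \<rho> rest x) * deriv (gamw w \<rho> rest) x ^ N"
    using chain_conv_and_chainv_eq[OF word sq_root N] by blast
  have "sqrt (cmod (\<rho> a)) < cmod (y - w (-a))"
    using exterior[OF y, of "-a"] rho_sym aI by simp
  then have near_y: "cmod (gamw w \<rho> (a # rest) x - w (-a)) < min (r (-a)) (cmod (y - w (-a)))"
    using gamw_in_disc[OF word] near by (simp add: as)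
  have hol_psi0: "(\<lambda>x. psi0 N f x y) holomorphic_on ball (w (-a)) (min (r (-a)) (cmod (y - w (-a))))"
    using hol aI by (intro psi0_holomorphic_on_ball) simp
  have "(\<lambda>m. chainv w sq N (a # rest) x m * qq w sq N f a y m)
      sums (psi0 N f (gamw w \<rho> (a # rest) x) y * deriv (gamw w \<rho> (a # rest)) x ^ N)"
    unfolding qq_eq_expansion_coeff
    by (rule sums_expansion_coeff_word[OF word chain(2) hol_psi0 near_y sq_root N])
  with chain(1) show ?thesis
    by (simp add: as)
qed

end
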